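(* For any function quasi-norm $\rho$ over a $\sigma$-finite measure space $(\Omega,\Sigma,\mu)$ we have $L_\rho^d\subseteq L_\rho^b$.
   Context: $L_0^+(\mu)$ / $L_0(\mu)$: measurable functions $\Omega\to[0,\infty]$ / $\Omega\to\mathbb{F}$ modulo a.e. equality. A function quasi-norm is $\rho\colon L_0^+(\mu)\to[0,\infty]$ with (F1) $\rho(tf)=t\rho(f)$, $t\ge0$; (F2) $f\le g$ a.e. $\Rightarrow\rho(f)\le\rho(g)$; (F3) $\rho(\chi_E)<\infty$ if $\mu(E)<\infty$; (F4) for all $E$ with $\mu(E)<\infty$ and $\varepsilon>0$ there is $\delta>0$ with $\mu(A)\le\varepsilon$ whenever $A\subseteq E$ measurable and $\rho(\chi_A)\le\delta$; (F5) $\rho(f+g)\le\kappa(\rho(f)+\rho(g))$. $L_\rho=\{f\in L_0(\mu):\rho(|f|)<\infty\}$ with quasi-norm $\rho(|f|)$. A function $g\in L_0^+(\mu)$ with $\rho(g)<\infty$ is dominating if $\lim_n\rho(g_n)=0$ for every non-increasing $(g_n)$ in $L_0^+(\mu)$ with $g_1\le g$ and $\lim_ng_n=0$. $L_\rho^d=\{f\in L_\rho:|f|\text{ is dominating}\}$. $L_\rho^b$ is the closure in $L_\rho$ of $\mathcal{S}(\mu)=\operatorname{span}\{\chi_E:E\in\Sigma,\ \mu(E)<\infty\}$. *)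

theory Defs
  imports "HOL-Analysis.Analysis"
begin

text \<open>Elements of L_0^+(mu) are represented by Borel measurable functions into ennreal;
  rho is a map on all such functions whose axioms are imposed on measurable ones.
  By (F2) applied in both directions, rho is automatically invariant under a.e. equality.\<close>

definition function_quasi_norm :: "'a measure \<Rightarrow> (('a \<Rightarrow> ennreal) \<Rightarrow> ennreal) \<Rightarrow> bool" where
  "function_quasi_norm M \<rho> \<longleftrightarrow>
     \<comment> \<open>(F1)\<close>
     (\<forall>f \<in> borel_measurable M. \<forall>t::real. t \<ge> 0 \<longrightarrow>
         \<rho> (\<lambda>x. ennreal t * f x) = ennreal t * \<rho> f) \<and>
     \<comment> \<open>(F2)\<close>
     (\<forall>f \<in> borel_measurable M. \<forall>g \<in> borel_measurable M.
         (AE x in M. f x \<le> g x) \<longrightarrow> \<rho> f \<le> \<rho> g) \<and>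
     \<comment> \<open>(F3)\<close>
     (\<forall>E \<in> sets M. emeasure M E < \<infinity> \<longrightarrow> \<rho> (indicator E) < \<infinity>) \<and>
     \<comment> \<open>(F4)\<close>
     (\<forall>E \<in> sets M. emeasure M E < \<infinity> \<longrightarrow>
        (\<forall>\<epsilon>::real. \<epsilon> > 0 \<longrightarrow> (\<exists>\<delta>::real. \<delta> > 0 \<and>
           (\<forall>A \<in> sets M. A \<subseteq> E \<and> \<rho> (indicator A) \<le> ennreal \<delta> \<longrightarrow>
               emeasure M A \<le> ennreal \<epsilon>)))) \<and>
     \<comment> \<open>(F5)\<close>
     (\<exists>\<kappa>::real. \<forall>f \<in> borel_measurable M. \<forall>g \<in> borel_measurable M.
         \<rho> (\<lambda>x. f x + g x) \<le> ennreal \<kappa> * (\<rho> f + \<rho> g))"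

definition fmod :: "('a \<Rightarrow> 'b::real_normed_field) \<Rightarrow> 'a \<Rightarrow> ennreal" where
  "fmod f = (\<lambda>x. ennreal (norm (f x)))"

definition L_rho :: "'a measure \<Rightarrow> (('a \<Rightarrow> ennreal) \<Rightarrow> ennreal) \<Rightarrow> ('a \<Rightarrow> 'b::real_normed_field) set" where
  "L_rho M \<rho> = {f. f \<in> borel_measurable M \<and> \<rho> (fmod f) < \<infinity>}"

definition dominating :: "'a measure \<Rightarrow> (('a \<Rightarrow> ennreal) \<Rightarrow> ennreal) \<Rightarrow> ('a \<Rightarrow> ennreal) \<Rightarrow> bool" where
  "dominating M \<rho> g \<longleftrightarrow> g \<in> borel_measurable M \<and> \<rho> g < \<infinity> \<and>
     (\<forall>gs :: nat \<Rightarrow> 'a \<Rightarrow> ennreal.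
        (\<forall>n. gs n \<in> borel_measurable M) \<and>
        (\<forall>n. AE x in M. gs (Suc n) x \<le> gs n x) \<and>
        (AE x in M. gs 0 x \<le> g x) \<and>
        (AE x in M. (\<lambda>n. gs n x) \<longlonglongrightarrow> 0)
        \<longrightarrow> (\<lambda>n. \<rho> (gs n)) \<longlonglongrightarrow> 0)"

definition L_rho_d :: "'a measure \<Rightarrow> (('a \<Rightarrow> ennreal) \<Rightarrow> ennreal) \<Rightarrow> ('a \<Rightarrow> 'b::real_normed_field) set" where
  "L_rho_d M \<rho> = {f \<in> L_rho M \<rho>. dominating M \<rho> (fmod f)}"

definition simple_span :: "'a measure \<Rightarrow> ('a \<Rightarrow> 'b::real_normed_field) set" where
  "simple_span M = {(\<lambda>x. \<Sum>i\<in>I. c i * indicator (E i) x) | (I :: nat set) c E.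
      finite I \<and> (\<forall>i\<in>I. E i \<in> sets M \<and> emeasure M (E i) < \<infinity>)}"

text \<open>Closure of S(mu) in L_rho with respect to the quasi-norm f \<mapsto> rho(|f|):
  the sets {g. rho(|f - g|) < eps} form a neighbourhood base of f.\<close>
definition L_rho_b :: "'a measure \<Rightarrow> (('a \<Rightarrow> ennreal) \<Rightarrow> ennreal) \<Rightarrow> ('a \<Rightarrow> 'b::real_normed_field) set" where
  "L_rho_b M \<rho> = {f \<in> L_rho M \<rho>. \<forall>\<epsilon>::real. \<epsilon> > 0 \<longrightarrow>
      (\<exists>s \<in> simple_span M. \<rho> (fmod (\<lambda>x. f x - s x)) < ennreal \<epsilon>)}"

end

theory Submission
  imports Defs
begin

text \<open>Truncating the standard simple approximations of f to an exhausting increasing sequence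
  of sets of finite measure gives s_k \<in> S(\<mu>) with s_k -> f pointwise and
  |f - s_k| \<le> 3|f|. Since |f| is dominating, a dominated convergence theorem for \<rho>,
  applied to |f - s_k|/3, yields \<rho>(|f - s_k|) -> 0.\<close>

lemma function_quasi_norm_scale:
  assumes "function_quasi_norm M \<rho>" "f \<in> borel_measurable M" "t \<ge> 0"
  shows "\<rho> (\<lambda>x. ennreal t * f x) = ennreal t * \<rho> f"
proof -
  have "\<forall>f \<in> borel_measurable M. \<forall>t::real. t \<ge> 0 \<longrightarrow> \<rho> (\<lambda>x. ennreal t * f x) = ennreal t * \<rho> f"
    using assms(1) unfolding function_quasi_norm_def by (rule conjunct1)
  then show ?thesis
    using assms(2,3) by blast
qed

lemma function_quasi_norm_mono:
  assumes "function_quasi_norm M \<rho>" "f \<in> borel_measurable M" "g \<in> borel_measurable M"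
    and "AE x in M. f x \<le> g x"
  shows "\<rho> f \<le> \<rho> g"
proof -
  have "\<forall>f \<in> borel_measurable M. \<forall>g \<in> borel_measurable M. (AE x in M. f x \<le> g x) \<longrightarrow> \<rho> f \<le> \<rho> g"
    using assms(1) unfolding function_quasi_norm_def by (elim conjE)
  then show ?thesis
    using assms(2-4) by blast
qed

lemma simple_spanI:
  fixes c :: "'i \<Rightarrow> 'b::real_normed_field"
  assumes "finite I" and "\<And>i. i \<in> I \<Longrightarrow> E i \<in> sets M \<and> emeasure M (E i) < \<infinity>"
  shows "(\<lambda>x. \<Sum>i\<in>I. c i * indicator (E i) x) \<in> simple_span M"
proof -
  obtain h where h: "bij_betw h {0..<card I} I"
    using ex_bij_betw_nat_finite[OF assms(1)] by blast
  show ?thesis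
    unfolding simple_span_def mem_Collect_eq
  proof (intro exI conjI)
    show "(\<lambda>x. \<Sum>i\<in>I. c i * indicator (E i) x) = (\<lambda>x. \<Sum>j\<in>{0..<card I}. c (h j) * indicator (E (h j)) x)"
      by (intro ext) (rule sum.reindex_bij_betw[OF h, symmetric])
    show "\<forall>j\<in>{0..<card I}. E (h j) \<in> sets M \<and> emeasure M (E (h j)) < \<infinity>"
      using assms(2) bij_betwE[OF h] by blast
  qed simp
qed

lemma simple_function_mult_indicator_in_simple_span:
  fixes g :: "'a \<Rightarrow> 'b::real_normed_field"
  assumes g: "simple_function M g" and E: "E \<in> sets M" "emeasure M E < \<infinity>"
  shows "(\<lambda>x. g x * indicator E x) \<in> simple_span M"
proof -
  define S where "S v = g -` {v} \<inter> space M \<inter> E" for v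
  have S: "S v \<in> sets M \<and> emeasure M (S v) < \<infinity>" for v
  proof
    show "S v \<in> sets M"
      using simple_functionD(2)[OF g, of "{v}"] E(1) unfolding S_def by blast
    then show "emeasure M (S v) < \<infinity>"
      using emeasure_mono[of "S v" E M] E unfolding S_def by (simp add: le_less_trans)
  qed
  have "g x * indicator E x = (\<Sum>v\<in>g ` space M. v * indicator (S v) x)" for x
  proof (cases "x \<in> E")
    case True
    then have x: "x \<in> space M"
      using E(1) sets.sets_into_space by blast
    have "(\<Sum>v\<in>g ` space M. v * indicator (S v) x) = (\<Sum>v\<in>g ` space M. if v = g x then g x else 0)"
      by (rule sum.cong) (auto simp: S_def True x)
    also have "\<dots> = g x"
      using simple_functionD(1)[OF g] x by simp
    finally show ?thesis
      using True by simp
  qed (simp add: S_def)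
  then show ?thesis
    using simple_spanI[of "g ` space M" S M "\<lambda>v. v"] simple_functionD(1)[OF g] S by simp
qed

lemma sigma_finite_simple_span_approximation:
  fixes f :: "'a \<Rightarrow> 'b::{real_normed_field, second_countable_topology}"
  assumes "sigma_finite_measure M" and f[measurable]: "f \<in> borel_measurable M"
  obtains s where "\<And>k. s k \<in> simple_span M" "\<And>k. s k \<in> borel_measurable M"
    and "\<And>x. x \<in> space M \<Longrightarrow> (\<lambda>k. s k x) \<longlonglongrightarrow> f x"
    and "\<And>k x. x \<in> space M \<Longrightarrow> norm (f x - s k x) \<le> 3 * norm (f x)"
proof -
  obtain F where F: "\<And>k. simple_function M (F k)"
    and F_lim: "\<And>x. x \<in> space M \<Longrightarrow> (\<lambda>k. F k x) \<longlonglongrightarrow> f x"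
    and F_bound: "\<And>k x. x \<in> space M \<Longrightarrow> norm (F k x) \<le> 2 * norm (f x)"
    using borel_measurable_implies_sequence_metric[OF f, of 0] unfolding dist_norm diff_zero by blast
  obtain A :: "nat \<Rightarrow> 'a set" where A: "range A \<subseteq> sets M" "(\<Union>k. A k) = space M"
    "\<And>k. emeasure M (A k) \<noteq> \<infinity>" "incseq A"
    using sigma_finite_measure.sigma_finite_incseq[OF assms(1)] by metis
  have A_sets[measurable]: "A k \<in> sets M" for k
    using A(1) by auto
  define s where "s k x = F k x * indicator (A k) x" for k x
  show ?thesis
  proof
    show "s k \<in> simple_span M" for k
      unfolding s_def[abs_def]
      using simple_function_mult_indicator_in_simple_span[OF F A_sets] A(3) by (simp add: less_top)
    show "s k \<in> borel_measurable M" for k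
      using borel_measurable_simple_function[OF F] unfolding s_def[abs_def] by measurable
  next
    fix x assume x: "x \<in> space M"
    then obtain m where "x \<in> A m"
      using A(2) by blast
    then have "\<forall>k\<ge>m. x \<in> A k"
      using A(4) by (auto simp: incseq_def)
    then have "\<forall>k\<ge>m. s k x = F k x"
      by (simp add: s_def)
    then show "(\<lambda>k. s k x) \<longlonglongrightarrow> f x"
      using Lim_transform_eventually[OF F_lim[OF x]] eventually_sequentiallyI by (metis (mono_tags))
    fix k
    have "norm (s k x) \<le> 2 * norm (f x)"
      using F_bound[OF x, of k] by (simp add: s_def indicator_def)
    then show "norm (f x - s k x) \<le> 3 * norm (f x)"
      using norm_triangle_ineq4[of "f x" "s k x"] by linarith
  qed
qed

lemma dominatingD:
  assumes "dominating M \<rho> g" and "\<And>n. gs n \<in> borel_measurable M"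
    and "\<And>n. AE x in M. gs (Suc n) x \<le> gs n x" and "AE x in M. gs 0 x \<le> g x"
    and "AE x in M. (\<lambda>n. gs n x) \<longlonglongrightarrow> 0"
  shows "(\<lambda>n. \<rho> (gs n)) \<longlonglongrightarrow> 0"
  using assms unfolding dominating_def by simp

text \<open>The tail suprema of the sequence form a non-increasing sequence below the dominating
  function tending to 0 a.e., to which the definition of dominating applies.\<close>
lemma dominating_tendsto_zero:
  assumes \<rho>: "function_quasi_norm M \<rho>" and g: "dominating M \<rho> g"
    and a[measurable]: "\<And>k. a k \<in> borel_measurable M"
    and a_le: "AE x in M. \<forall>k. a k x \<le> g x"
    and a_lim: "AE x in M. (\<lambda>k. a k x) \<longlonglongrightarrow> 0"
  shows "(\<lambda>k. \<rho> (a k)) \<longlonglongrightarrow> 0"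
proof -
  define gs where "gs n x = (SUP k\<in>{n..}. a k x)" for n x
  have gs[measurable]: "gs n \<in> borel_measurable M" for n
    unfolding gs_def[abs_def] by (intro borel_measurable_SUP a) auto
  have gs_Suc: "gs (Suc n) x \<le> gs n x" for n x
    unfolding gs_def by (rule SUP_subset_mono) auto
  have gs_0: "AE x in M. gs 0 x \<le> g x"
    using a_le by eventually_elim (auto simp: gs_def intro: SUP_least)
  have gs_lim: "AE x in M. (\<lambda>n. gs n x) \<longlonglongrightarrow> 0"
    using a_lim
  proof eventually_elim
    case (elim x)
    then have "limsup (\<lambda>k. a k x) = 0"
      by (intro lim_imp_Limsup) auto
    then have "(INF n. gs n x) = 0"
      unfolding gs_def limsup_INF_SUP by simp
    moreover have "decseq (\<lambda>n. gs n x)"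
      using gs_Suc by (simp add: decseq_Suc_iff)
    ultimately show ?case
      using LIMSEQ_INF[of "\<lambda>n. gs n x"] by simp
  qed
  have "AE x in M. gs (Suc n) x \<le> gs n x" for n
    using gs_Suc by simp
  then have \<rho>_gs_lim: "(\<lambda>n. \<rho> (gs n)) \<longlonglongrightarrow> 0"
    using dominatingD[OF g gs _ gs_0 gs_lim] by blast
  have "\<rho> (a n) \<le> \<rho> (gs n)" for n
    by (rule function_quasi_norm_mono[OF \<rho> a gs]) (auto simp: gs_def intro: SUP_upper)
  then show ?thesis
    by (intro tendsto_sandwich[OF _ _ tendsto_const \<rho>_gs_lim]) simp_all
qed

lemma dominating_fmod_diff_tendsto_zero:
  fixes f :: "'a \<Rightarrow> 'b::{real_normed_field, second_countable_topology}"
  assumes \<rho>: "function_quasi_norm M \<rho>" and dom: "dominating M \<rho> (fmod f)"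
    and f[measurable]: "f \<in> borel_measurable M" and s[measurable]: "\<And>k. s k \<in> borel_measurable M"
    and lim: "\<And>x. x \<in> space M \<Longrightarrow> (\<lambda>k. s k x) \<longlonglongrightarrow> f x"
    and C: "C > 0" and bound: "\<And>k x. x \<in> space M \<Longrightarrow> norm (f x - s k x) \<le> C * norm (f x)"
  shows "(\<lambda>k. \<rho> (fmod (\<lambda>x. f x - s k x))) \<longlonglongrightarrow> 0"
proof -
  \<comment> \<open>Scaling by 1/C puts the errors below |f|; (F1) recovers the factor C.\<close>
  define a where "a k x = ennreal (norm (f x - s k x) / C)" for k x
  have a[measurable]: "a k \<in> borel_measurable M" for k
    unfolding a_def[abs_def] by measurable
  have "AE x in M. \<forall>k. a k x \<le> fmod f x"
    using bound C by (auto simp: a_def fmod_def divide_le_eq mult.commute intro!: AE_I2 ennreal_leI)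
  moreover have "AE x in M. (\<lambda>k. a k x) \<longlonglongrightarrow> 0"
  proof (rule AE_I2)
    fix x assume "x \<in> space M"
    then have "(\<lambda>k. f x - s k x) \<longlonglongrightarrow> 0"
      using tendsto_diff[OF tendsto_const[of "f x"] lim[of x]] by simp
    then have "(\<lambda>k. norm (f x - s k x) / C) \<longlonglongrightarrow> 0"
      by (intro tendsto_divide_zero tendsto_norm_zero)
    then show "(\<lambda>k. a k x) \<longlonglongrightarrow> 0"
      unfolding a_def using tendsto_ennrealI by fastforce
  qed
  ultimately have "(\<lambda>k. \<rho> (a k)) \<longlonglongrightarrow> 0"
    by (rule dominating_tendsto_zero[OF \<rho> dom a])
  then have "(\<lambda>k. ennreal C * \<rho> (a k)) \<longlonglongrightarrow> 0"
    using ennreal_tendsto_cmult[of "ennreal C" "\<lambda>k. \<rho> (a k)" 0 sequentially] by simp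
  moreover have "\<rho> (fmod (\<lambda>x. f x - s k x)) = ennreal C * \<rho> (a k)" for k
  proof -
    have "fmod (\<lambda>x. f x - s k x) = (\<lambda>x. ennreal C * a k x)"
    proof
      fix x
      have "fmod (\<lambda>x. f x - s k x) x = ennreal (C * (norm (f x - s k x) / C))"
        using C by (simp add: fmod_def)
      also have "\<dots> = ennreal C * a k x"
        unfolding a_def using C by (intro ennreal_mult) auto
      finally show "fmod (\<lambda>x. f x - s k x) x = ennreal C * a k x" .
    qed
    then show ?thesis
      using function_quasi_norm_scale[OF \<rho> a, of C k] C by simp
  qed
  ultimately show ?thesis
    by simp
qed

lemma L_rho_bI:
  assumes "f \<in> L_rho M \<rho>" and "\<And>k. s k \<in> simple_span M"
    and "(\<lambda>k. \<rho> (fmod (\<lambda>x. f x - s k x))) \<longlonglongrightarrow> 0"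
  shows "f \<in> L_rho_b M \<rho>"
  unfolding L_rho_b_def
proof (intro CollectI conjI allI impI assms(1))
  fix \<epsilon> :: real assume "\<epsilon> > 0"
  then obtain k where "\<rho> (fmod (\<lambda>x. f x - s k x)) < ennreal \<epsilon>"
    using order_tendstoD(2)[OF assms(3), of "ennreal \<epsilon>"] by (auto simp: eventually_sequentially)
  then show "\<exists>s\<in>simple_span M. \<rho> (fmod (\<lambda>x. f x - s x)) < ennreal \<epsilon>"
    using assms(2) by blast
qed

theorem proposition3p28:
  fixes M :: "'a measure" and \<rho> :: "('a \<Rightarrow> ennreal) \<Rightarrow> ennreal"
  assumes "sigma_finite_measure M"
    and "function_quasi_norm M \<rho>"
  shows "(L_rho_d M \<rho> :: ('a \<Rightarrow> 'b::{real_normed_field, second_countable_topology}) set)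
           \<subseteq> L_rho_b M \<rho>"
proof
  fix f :: "'a \<Rightarrow> 'b"
  assume "f \<in> L_rho_d M \<rho>"
  then have f: "f \<in> L_rho M \<rho>" "dominating M \<rho> (fmod f)" "f \<in> borel_measurable M"
    unfolding L_rho_d_def L_rho_def by auto
  obtain s where s_span: "\<And>k. s k \<in> simple_span M"
    and s: "\<And>k. s k \<in> borel_measurable M"
    "\<And>x. x \<in> space M \<Longrightarrow> (\<lambda>k. s k x) \<longlonglongrightarrow> f x"
    "\<And>k x. x \<in> space M \<Longrightarrow> norm (f x - s k x) \<le> 3 * norm (f x)"
    using sigma_finite_simple_span_approximation[OF assms(1) f(3)] by blast
  have "(\<lambda>k. \<rho> (fmod (\<lambda>x. f x - s k x))) \<longlonglongrightarrow> 0"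
    by (rule dominating_fmod_diff_tendsto_zero[OF assms(2) f(2,3) s(1,2) _ s(3)]) simp_all
  then show "f \<in> L_rho_b M \<rho>"
    by (rule L_rho_bI[where s=s, OF f(1) s_span])
qed

end
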